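(* Let $n\ge 0$ be an integer and for $k\in\mathbb{Z}_+$ let $$v_k(t)=c_k\,e^{-\frac{t^{2n+2}}{2n+2}}L^{(-\frac{1}{2n+2})}_{k}\!\left(\frac{t^{2n+2}}{n+1}\right),\qquad w_k(t)=d_k\,e^{-\frac{t^{2n+2}}{2n+2}}\,t\,L^{(\frac{1}{2n+2})}_{k}\!\left(\frac{t^{2n+2}}{n+1}\right),$$ with $c_k,d_k>0$ chosen so that $\|t^nv_k\|_{L^2(\mathbb{R})}=\|t^nw_k\|_{L^2(\mathbb{R})}=1$, and let $E_k=4k(n+1)+2n+1$. There exists a constant $C_0>0$ such that for all $k\in\mathbb{Z}_+$ $$\|v_k\|_{L^\infty(\mathbb{R})}\le C_0E_k^{\frac32+\frac{1}{4n+4}},\qquad \|w_k\|_{L^\infty(\mathbb{R})}\le C_0E_k^{\frac32+\frac{1}{4n+4}}.$$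
   Context: $L^{(a)}_k$ denotes the generalized Laguerre polynomial of degree $k$ and parameter $a$. These functions solve $-u''+t^{2(2n+1)}u=E\,t^{2n}u$, with $E=E_k$ for $v_k$ and $E=4k(n+1)+2n+3$ for $w_k$. *)

theory Defs
  imports "HOL-Analysis.Analysis"
begin

definition laguerre :: "real \<Rightarrow> nat \<Rightarrow> real \<Rightarrow> real" where
  "laguerre a k x = (\<Sum>i\<le>k. (-1)^i * ((real k + a) gchoose (k - i)) * x^i / fact i)"

text \<open>Unnormalized profiles: v_k = c_k * vprof, w_k = d_k * wprof.\<close>
definition vprof :: "nat \<Rightarrow> nat \<Rightarrow> real \<Rightarrow> real" where
  "vprof n k t = exp (- (t^(2*n+2)) / (2*n+2))
     * laguerre (- 1 / (2*n+2)) k (t^(2*n+2) / (n+1))"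

definition wprof :: "nat \<Rightarrow> nat \<Rightarrow> real \<Rightarrow> real" where
  "wprof n k t = exp (- (t^(2*n+2)) / (2*n+2)) * t
     * laguerre (1 / (2*n+2)) k (t^(2*n+2) / (n+1))"

definition Ek :: "nat \<Rightarrow> nat \<Rightarrow> real" where
  "Ek n k = 4 * real k * (real n + 1) + 2 * real n + 1"

end

theory Submission
  imports Defs "HOL-Computational_Algebra.Polynomial"
begin

text \<open>
  Substituting \<open>u(t) = t^m exp(-t^(2n+2)/(2n+2)) L(t^(2n+2)/(n+1))\<close> with \<open>m \<in> {0,1}\<close> turns
  Kummer's equation \<open>x L'' + (a + 1 - x) L' + k L = 0\<close>, satisfied by the Laguerre polynomial
  with \<open>a = (2m - 1)/(2n + 2)\<close>, into \<open>u'' = (t^(4n+2) - E t^(2n)) u\<close> with \<open>E = E_k + 2m\<close>.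
  Every solution of this equation with \<open>\<integral> t^(2n) u^2 \<le> 1\<close> satisfies \<open>|u| \<le> 3 + E/2\<close>, far
  better than the claimed power of \<open>E_k\<close>. Indeed \<open>(u u')' = u'^2 + (t^(4n+2) - E t^(2n)) u^2\<close>,
  so integrating from a point \<open>a\<close> with \<open>u u' \<ge> 0\<close> to a point \<open>b > a\<close> with \<open>u u' \<le> 0\<close> gives
  \<open>\<integral>\<^sub>a\<^sup>b u'^2 \<le> E\<close>. Such points exist arbitrarily far out on both sides, since otherwise
  \<open>u^2\<close> would be monotone near infinity, against the mass bound. The mass bound also gives
  \<open>|u s| \<le> 2\<close> at some \<open>s\<close> within distance 2 of any \<open>t\<close>, and
  \<open>2 |u t - u s| \<le> |t - s| + \<integral> u'^2\<close>.
\<close>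

section \<open>Laguerre polynomials\<close>

definition laguerre_poly :: "real \<Rightarrow> nat \<Rightarrow> real poly" where
  "laguerre_poly a k = (\<Sum>i\<le>k. monom ((-1)^i * ((real k + a) gchoose (k - i)) / fact i) i)"

lemma poly_laguerre_poly: "poly (laguerre_poly a k) x = laguerre a k x"
  by (simp add: laguerre_poly_def laguerre_def poly_sum poly_monom)

lemma coeff_laguerre_poly:
  "coeff (laguerre_poly a k) i =
     (if i \<le> k then (-1)^i * ((real k + a) gchoose (k - i)) / fact i else 0)"
  by (simp add: laguerre_poly_def coeff_sum)

lemma coeff_laguerre_poly_Suc:
  "real (Suc i) * (real (Suc i) + a) * coeff (laguerre_poly a k) (Suc i)
     = - (real k - real i) * coeff (laguerre_poly a k) i"
proof (cases "i < k")
  case True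
  define j where "j = k - Suc i"
  have k: "k - i = Suc j" "k - Suc i = j" "real (Suc i) + a = (real k + a) - real j"
    using True by (auto simp: j_def)
  have rec:
    "(real (Suc i) + a) * ((real k + a) gchoose j) = real (Suc j) * ((real k + a) gchoose Suc j)"
    unfolding k(3) using gbinomial_mult_1[of "real k + a" j] by (simp add: algebra_simps)
  have Suc_coeff: "real (Suc i) * coeff (laguerre_poly a k) (Suc i)
      = - ((-1)^i * ((real k + a) gchoose j) / fact i)"
    using True by (simp add: coeff_laguerre_poly k(2) fact_Suc)
  have "real (Suc i) * (real (Suc i) + a) * coeff (laguerre_poly a k) (Suc i)
      = (real (Suc i) + a) * (real (Suc i) * coeff (laguerre_poly a k) (Suc i))"
    by (simp only: ac_simps)
  also have "\<dots> = - ((-1)^i * ((real (Suc i) + a) * ((real k + a) gchoose j)) / fact i)"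
    unfolding Suc_coeff by simp
  also have "\<dots> = - (real k - real i) * coeff (laguerre_poly a k) i"
    unfolding rec using True
    by (simp add: coeff_laguerre_poly k(1) of_nat_diff[symmetric] algebra_simps
        add_divide_distrib diff_divide_distrib)
  finally show ?thesis .
next
  case False
  then show ?thesis by (auto simp: coeff_laguerre_poly)
qed

lemma laguerre_poly_ode:
  "monom 1 1 * (pderiv (pderiv (laguerre_poly a k)) - pderiv (laguerre_poly a k))
     + smult (a + 1) (pderiv (laguerre_poly a k)) + smult (real k) (laguerre_poly a k) = 0"
proof (rule poly_eqI)
  fix i
  define c where "c = coeff (laguerre_poly a k)"
  have "coeff (monom 1 1 * (pderiv (pderiv (laguerre_poly a k)) - pderiv (laguerre_poly a k))) i
      = real i * real (Suc i) * c (Suc i) - real i * c i"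
    by (cases i) (simp_all add: coeff_monom_mult coeff_pderiv c_def)
  then show "coeff (monom 1 1 * (pderiv (pderiv (laguerre_poly a k)) - pderiv (laguerre_poly a k))
      + smult (a + 1) (pderiv (laguerre_poly a k)) + smult (real k) (laguerre_poly a k)) i = coeff 0 i"
    using coeff_laguerre_poly_Suc[of i a k] by (simp add: coeff_pderiv c_def[symmetric] algebra_simps)
qed

lemma laguerre_ode:
  "x * poly (pderiv (pderiv (laguerre_poly a k))) x
     + (a + 1 - x) * poly (pderiv (laguerre_poly a k)) x + real k * poly (laguerre_poly a k) x = 0"
  using arg_cong[OF laguerre_poly_ode, of "\<lambda>p. poly p x"]
  by (simp add: poly_monom algebra_simps)

section \<open>From Kummer's equation to the oscillator equation\<close>

lemma has_real_derivative_power_le_1: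
  fixes t :: real
  assumes "m \<le> 1"
  shows "((\<lambda>t. t^m) has_real_derivative real m) (at t)"
  using assms by (cases m) (auto intro!: derivative_eq_intros)

text \<open>The restriction \<open>m \<le> 1\<close> makes \<open>(t^m)'' = 0\<close>, which the identity needs.\<close>

lemma schroedinger_identity_of_kummer_identity:
  fixes t \<phi> x L L1 L2 a \<kappa> :: real and n m :: nat
  assumes m: "m \<le> 1"
    and a: "a = (2 * real m - 1) / (2 * real n + 2)"
    and x: "x = t^(2*n+2) / (n+1)"
    and kummer: "x * L2 + (a + 1 - x) * L1 + \<kappa> * L = 0"
  defines "E \<equiv> 4 * \<kappa> * (real n + 1) + 2 * real n + 1 + 2 * real m"
  shows "real m * (t^(2*n+1) * (\<phi> * (2 * L1 - L)))
      + ((m+2*n+1) * t^(m+2*n) * (\<phi> * (2 * L1 - L))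
        + t^(m+2*n+1) * (t^(2*n+1) * \<phi> * (4 * L2 - 4 * L1 + L)))
    = (t^(4*n+2) - E * t^(2*n)) * (t^m * (\<phi> * L))"
proof -
  define T where "T = t^(2*n+2)"
  have "4 * (real n + 1) * a = 4 * real m - 2"
    unfolding a by (simp add: field_simps)
  moreover have "T = (real n + 1) * x"
    unfolding T_def x by (simp add: field_simps)
  then have "4*T*L2 + (4*real m + 4*real n + 2 - 4*T) * L1 + 4*(real n+1)*\<kappa>*L
      = 4 * (real n + 1) * (x * L2 + (a + 1 - x) * L1 + \<kappa> * L)
        + (4 * real m - 2 - 4 * (real n + 1) * a) * L1"
    by (simp add: algebra_simps)
  ultimately have scaled: "4*T*L2 + (4*real m + 4*real n + 2 - 4*T) * L1 + 4*(real n+1)*\<kappa>*L = 0"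
    using kummer by simp
  have bracket: "(2*m+2*n+1) * (2 * L1 - L) + T * (4 * L2 - 4 * L1 + L) = (T - E) * L"
    using scaled unfolding E_def by (simp add: algebra_simps)
  have mt: "real m * t^(2*n+1) = real m * t^(m+2*n)"
    using m by (cases m) auto
  have "t^(4*n+2) = T * t^(2*n)"
    unfolding T_def power_add[symmetric] by (simp add: algebra_simps)
  then have "(t^(4*n+2) - E * t^(2*n)) * (t^m * (\<phi> * L)) = t^(m+2*n) * \<phi> * ((T - E) * L)"
    by (simp add: power_add algebra_simps)
  also have "\<dots> = t^(m+2*n) * \<phi> * ((2*m+2*n+1) * (2 * L1 - L) + T * (4 * L2 - 4 * L1 + L))"
    unfolding bracket ..
  also have "\<dots> = real m * (t^(2*n+1) * (\<phi> * (2 * L1 - L)))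
      + ((m+2*n+1) * t^(m+2*n) * (\<phi> * (2 * L1 - L))
        + t^(m+2*n+1) * (t^(2*n+1) * \<phi> * (4 * L2 - 4 * L1 + L)))"
    unfolding T_def mult.assoc[symmetric] mt by (simp add: power_add algebra_simps)
  finally show ?thesis ..
qed

lemma schroedinger_ode_of_kummer_ode:
  fixes n m :: nat and a \<kappa> :: real and L L1 L2 :: "real \<Rightarrow> real"
  assumes m: "m \<le> 1"
    and a: "a = (2 * real m - 1) / (2 * real n + 2)"
    and L: "\<And>x. (L has_real_derivative L1 x) (at x)"
    and L1: "\<And>x. (L1 has_real_derivative L2 x) (at x)"
    and kummer: "\<And>x. x \<ge> 0 \<Longrightarrow> x * L2 x + (a + 1 - x) * L1 x + \<kappa> * L x = 0"
  defines "u \<equiv> \<lambda>t. t^m * exp (- (t^(2*n+2)) / (2*n+2)) * L (t^(2*n+2) / (n+1))"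
    and "E \<equiv> 4 * \<kappa> * (real n + 1) + 2 * real n + 1 + 2 * real m"
  shows "\<exists>u'. (\<forall>t. (u has_real_derivative u' t) (at t))
    \<and> (\<forall>t. (u' has_real_derivative (t^(4*n+2) - E * t^(2*n)) * u t) (at t))"
proof -
  define \<phi> where "\<phi> t = exp (- (t^(2*n+2)) / (2*n+2))" for t :: real
  define X where "X t = t^(2*n+2) / (n+1)" for t :: real
  define M where "M t = \<phi> t * (2 * L1 (X t) - L (X t))" for t
  have pow: "((\<lambda>t. t^(2*n+2)) has_real_derivative (2*n+2) * t^(2*n+1)) (at t)" for t :: real
    by (rule DERIV_cong[OF DERIV_pow]) simp
  have X': "(X has_real_derivative 2 * t^(2*n+1)) (at t)" for t
    unfolding X_def by (rule DERIV_cong[OF DERIV_cdivide[OF pow]]) (simp add: field_simps)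
  have \<phi>': "(\<phi> has_real_derivative - (t^(2*n+1)) * \<phi> t) (at t)" for t
    unfolding \<phi>_def
    by (rule DERIV_cong[OF DERIV_fun_exp[OF DERIV_cdivide[OF DERIV_minus[OF pow]]]]) (simp add: field_simps)
  have h': "((\<lambda>t. \<phi> t * L (X t)) has_real_derivative t^(2*n+1) * M t) (at t)" for t
    unfolding M_def
    by (rule DERIV_cong[OF DERIV_mult'[OF \<phi>' DERIV_chain2[OF L X']]]) (simp add: algebra_simps)
  have M': "(M has_real_derivative t^(2*n+1) * \<phi> t * (4 * L2 (X t) - 4 * L1 (X t) + L (X t))) (at t)"
    for t
    unfolding M_def
    by (rule DERIV_cong[OF DERIV_mult'[OF \<phi>'
          DERIV_diff[OF DERIV_cmult[OF DERIV_chain2[OF L1 X']] DERIV_chain2[OF L X']]]])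
      (simp add: algebra_simps)
  define u' where "u' t = real m * (\<phi> t * L (X t)) + t^(m+2*n+1) * M t" for t
  have u_eq: "u = (\<lambda>t. t^m * (\<phi> t * L (X t)))"
    by (simp add: u_def \<phi>_def X_def fun_eq_iff)
  have "(u has_real_derivative u' t) (at t)" for t
    unfolding u_eq u'_def
    by (rule DERIV_cong[OF DERIV_mult'[OF has_real_derivative_power_le_1[OF m] h']])
      (simp add: power_add algebra_simps)
  moreover have "(u' has_real_derivative (t^(4*n+2) - E * t^(2*n)) * u t) (at t)" for t
  proof -
    have "X t \<ge> 0"
      unfolding X_def by (intro divide_nonneg_pos zero_le_even_power) auto
    have "(u' has_real_derivative real m * (t^(2*n+1) * (\<phi> t * (2 * L1 (X t) - L (X t))))
        + ((m+2*n+1) * t^(m+2*n) * (\<phi> t * (2 * L1 (X t) - L (X t)))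
          + t^(m+2*n+1) * (t^(2*n+1) * \<phi> t * (4 * L2 (X t) - 4 * L1 (X t) + L (X t))))) (at t)"
      unfolding u'_def
      by (rule DERIV_cong[OF DERIV_add[OF DERIV_cmult[OF h'] DERIV_mult'[OF DERIV_pow M']]])
        (simp add: M_def algebra_simps)
    then show ?thesis
      unfolding schroedinger_identity_of_kummer_identity[OF m a X_def kummer[OF \<open>X t \<ge> 0\<close>]]
        u_eq E_def .
  qed
  ultimately show ?thesis by blast
qed

section \<open>Bound states\<close>

lemma has_integral_real_derivative:
  fixes f f' :: "real \<Rightarrow> real"
  assumes "a \<le> b" and "\<And>x. (f has_real_derivative f' x) (at x)"
  shows "(f' has_integral (f b - f a)) {a..b}"
  using assms
  by (intro fundamental_theorem_of_calculus)
     (auto simp: has_real_derivative_iff_has_vector_derivative[symmetric]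
        intro: has_field_derivative_at_within)

lemma abs_diff_le_integral_derivative_sq:
  fixes f f' :: "real \<Rightarrow> real"
  assumes "p \<le> q" and f: "\<And>x. (f has_real_derivative f' x) (at x)" and "continuous_on {p..q} f'"
  shows "2 * \<bar>f q - f p\<bar> \<le> (q - p) + integral {p..q} (\<lambda>x. (f' x)^2)"
proof -
  have int_f': "(f' has_integral (f q - f p)) {p..q}"
    using assms(1) f by (rule has_integral_real_derivative)
  have int_sq: "(\<lambda>x. (f' x)^2) integrable_on {p..q}"
    by (intro integrable_continuous_interval continuous_intros assms(3))
  have int_bound: "(\<lambda>x. (1 + (f' x)^2) / 2) integrable_on {p..q}"
    by (intro integrable_continuous_interval continuous_intros assms(3)) auto
  have am_gm: "norm (f' x) \<le> (1 + (f' x)^2) / 2" for x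
    using sum_squares_ge_zero[of "\<bar>f' x\<bar> - 1" 0] by (simp add: power2_eq_square algebra_simps)
  have "\<bar>f q - f p\<bar> \<le> integral {p..q} (\<lambda>x. (1 + (f' x)^2) / 2)"
    using integral_norm_bound_integral[OF has_integral_integrable[OF int_f'] int_bound am_gm]
    by (simp add: integral_unique[OF int_f'])
  also have "\<dots> = ((q - p) + integral {p..q} (\<lambda>x. (f' x)^2)) / 2"
    using int_sq assms(1) by (simp add: integral_add integrable_on_const)
  finally show ?thesis by simp
qed

locale bound_state =
  fixes u u' q w :: "real \<Rightarrow> real" and E :: real
  assumes u_deriv: "\<And>t. (u has_real_derivative u' t) (at t)"
    and u'_deriv: "\<And>t. (u' has_real_derivative (q t - E * w t) * u t) (at t)"
    and q_nonneg: "\<And>t. 0 \<le> q t"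
    and E_nonneg: "0 \<le> E"
    and w_cont: "continuous_on UNIV w"
    and w_ge_1: "\<And>t. 1 \<le> \<bar>t\<bar> \<Longrightarrow> 1 \<le> w t"
    and mass_le_1: "\<And>a b. integral {a..b} (\<lambda>t. w t * (u t)^2) \<le> 1"
begin

lemma continuous_on_u: "continuous_on S u"
  using u_deriv by (meson DERIV_isCont continuous_at_imp_continuous_on)

lemma continuous_on_u': "continuous_on S u'"
  using u'_deriv by (meson DERIV_isCont continuous_at_imp_continuous_on)

lemma integrable_mass: "(\<lambda>t. w t * (u t)^2) integrable_on {a..b}"
  by (intro integrable_continuous_interval continuous_intros continuous_on_u
      continuous_on_subset[OF w_cont]) auto

lemma mass_lower_bound:
  assumes "0 \<le> l" and "\<And>x. x \<in> {p..p+l} \<Longrightarrow> c \<le> w x * (u x)^2"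
  shows "c * l \<le> 1"
proof -
  have "integral {p..p+l} (\<lambda>_. c) \<le> integral {p..p+l} (\<lambda>t. w t * (u t)^2)"
    by (rule integral_le[OF integrable_const_ivl integrable_mass assms(2)])
  then show ?thesis
    using mass_le_1[of p "p+l"] assms(1) by (simp add: mult.commute)
qed

lemma small_value_nearby:
  assumes "1 \<le> p"
  shows "\<exists>s\<in>{p..p+1}. \<bar>u s\<bar> \<le> 2"
proof (rule ccontr)
  assume no_small: "\<not> ?thesis"
  have "4 \<le> w x * (u x)^2" if "x \<in> {p..p+1}" for x
  proof -
    have "2 \<le> \<bar>u x\<bar>" using no_small that by force
    then have "4 \<le> (u x)^2"
      using abs_le_square_iff[of 2 "u x"] by simp
    moreover have "1 \<le> w x" using w_ge_1 assms that by auto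
    ultimately show ?thesis
      using mult_mono[of 1 "w x" 4 "(u x)^2"] by simp
  qed
  with mass_lower_bound[of 1 p 4] show False by simp
qed

lemma exists_ge_u_mult_u'_nonpos: "\<exists>b\<ge>R. u b * u' b \<le> 0"
proof (rule ccontr)
  assume "\<not> ?thesis"
  then have growing: "0 < u b * u' b" if "R \<le> b" for b
    using that by force
  define R1 where "R1 = max R 1"
  define \<delta> where "\<delta> = (u R1)^2"
  have "\<delta> > 0"
    using growing[of R1] unfolding \<delta>_def R1_def by auto
  have "\<delta> \<le> w x * (u x)^2" if x: "x \<in> {R1..R1 + 2/\<delta>}" for x
  proof -
    have "\<delta> \<le> (u x)^2"
      unfolding \<delta>_def
    proof (rule DERIV_nonneg_imp_nondecreasing[of R1 x "\<lambda>x. (u x)^2"])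
      show "R1 \<le> x" using x by simp
      fix y assume "R1 \<le> y"
      then have "0 < u y * u' y" using growing R1_def by simp
      moreover have "((\<lambda>x. (u x)^2) has_real_derivative 2 * (u y * u' y)) (at y)"
        by (rule derivative_eq_intros u_deriv refl | simp)+
      ultimately show "\<exists>z. ((\<lambda>x. (u x)^2) has_real_derivative z) (at y) \<and> 0 \<le> z"
        by force
    qed
    moreover have "1 \<le> w x" using w_ge_1 x R1_def by simp
    ultimately show ?thesis
      using mult_mono[of 1 "w x" \<delta> "(u x)^2"] \<open>\<delta> > 0\<close> by simp
  qed
  with mass_lower_bound[of "2/\<delta>" R1 \<delta>] \<open>\<delta> > 0\<close> show False by simp
qed

lemma reflect: "bound_state (\<lambda>t. u (-t)) (\<lambda>t. - u' (-t)) (\<lambda>t. q (-t)) (\<lambda>t. w (-t)) E"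
proof
  show "((\<lambda>t. u (-t)) has_real_derivative - u' (-t)) (at t)" for t
    by (rule DERIV_cong[OF DERIV_chain2[OF u_deriv DERIV_minus[OF DERIV_ident]]]) simp
  show "((\<lambda>t. - u' (-t)) has_real_derivative (q (-t) - E * w (-t)) * u (-t)) (at t)" for t
    by (rule DERIV_cong[OF DERIV_minus[OF DERIV_chain2[OF u'_deriv DERIV_minus[OF DERIV_ident]]]]) simp
  show "continuous_on UNIV (\<lambda>t. w (-t))"
    by (intro continuous_on_compose2[OF w_cont] continuous_intros) auto
  show "integral {a..b} (\<lambda>t. w (-t) * (u (-t))^2) \<le> 1" for a b
    using Henstock_Kurzweil_Integration.integral_reflect_real
        [where a="-b" and b="-a" and f="\<lambda>t. w t * (u t)^2"] mass_le_1[of "-b" "-a"]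
    by simp
qed (use q_nonneg E_nonneg w_ge_1 in auto)

lemma exists_le_u_mult_u'_nonneg: "\<exists>a\<le>R. 0 \<le> u a * u' a"
proof -
  interpret reflected: bound_state "\<lambda>t. u (-t)" "\<lambda>t. - u' (-t)" "\<lambda>t. q (-t)" "\<lambda>t. w (-t)" E
    by (rule reflect)
  obtain b where "-R \<le> b" "u (-b) * - u' (-b) \<le> 0"
    using reflected.exists_ge_u_mult_u'_nonpos by blast
  then show ?thesis
    by (intro exI[of _ "-b"]) auto
qed

lemma kinetic_energy_le:
  assumes "a \<le> b" and "0 \<le> u a * u' a" and "u b * u' b \<le> 0"
  shows "integral {a..b} (\<lambda>t. (u' t)^2) \<le> E"
proof -
  have "((\<lambda>t. (u' t)^2 + (q t - E * w t) * (u t)^2) has_integral (u b * u' b - u a * u' a)) {a..b}"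
    using has_integral_real_derivative[where f="\<lambda>t. u t * u' t", OF assms(1)]
    by (simp add: DERIV_cong[OF DERIV_mult'[OF u_deriv u'_deriv]] power2_eq_square algebra_simps)
  then have rhs: "((\<lambda>t. (u' t)^2 + (q t - E * w t) * (u t)^2 + E * (w t * (u t)^2)) has_integral
      (u b * u' b - u a * u' a) + E * integral {a..b} (\<lambda>t. w t * (u t)^2)) {a..b}"
    by (intro has_integral_add has_integral_mult_right integrable_integral integrable_mass)
  have lhs: "((\<lambda>t. (u' t)^2) has_integral integral {a..b} (\<lambda>t. (u' t)^2)) {a..b}"
    by (intro integrable_integral integrable_continuous_interval continuous_intros continuous_on_u')
  have "(u' t)^2 \<le> (u' t)^2 + (q t - E * w t) * (u t)^2 + E * (w t * (u t)^2)" for t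
    using q_nonneg[of t] by (simp add: algebra_simps)
  then have "integral {a..b} (\<lambda>t. (u' t)^2)
      \<le> (u b * u' b - u a * u' a) + E * integral {a..b} (\<lambda>t. w t * (u t)^2)"
    by (intro has_integral_le[OF lhs rhs])
  also have "\<dots> \<le> E"
    using assms(2,3) mass_le_1[of a b] E_nonneg mult_left_mono[of _ 1 E] by fastforce
  finally show ?thesis .
qed

lemma abs_le_of_nonneg:
  assumes "0 \<le> t"
  shows "\<bar>u t\<bar> \<le> 3 + E / 2"
proof -
  obtain s where s: "max t 1 \<le> s" "s \<le> max t 1 + 1" "\<bar>u s\<bar> \<le> 2"
    using small_value_nearby[of "max t 1"] by auto
  obtain a where a: "a \<le> t" "0 \<le> u a * u' a"
    using exists_le_u_mult_u'_nonneg by blast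
  obtain b where b: "s \<le> b" "u b * u' b \<le> 0"
    using exists_ge_u_mult_u'_nonpos by blast
  have "integral {t..s} (\<lambda>x. (u' x)^2) \<le> integral {a..b} (\<lambda>x. (u' x)^2)"
    using a b s
    by (intro integral_subset_le integrable_continuous_interval continuous_intros continuous_on_u')
      auto
  also have "\<dots> \<le> E"
    using a b s by (intro kinetic_energy_le) auto
  finally have "2 * \<bar>u s - u t\<bar> \<le> (s - t) + E"
    using abs_diff_le_integral_derivative_sq[of t s u u', OF _ u_deriv continuous_on_u'] s by simp
  moreover have "s - t \<le> 2"
    using s assms by auto
  ultimately show ?thesis
    using s(3) by (simp add: abs_if split: if_splits)
qed

lemma abs_le: "\<bar>u t\<bar> \<le> 3 + E / 2"
proof (cases "0 \<le> t")
  case False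
  interpret reflected: bound_state "\<lambda>t. u (-t)" "\<lambda>t. - u' (-t)" "\<lambda>t. q (-t)" "\<lambda>t. w (-t)" E
    by (rule reflect)
  show ?thesis
    using reflected.abs_le_of_nonneg[of "-t"] False by simp
qed (rule abs_le_of_nonneg)

end

section \<open>The functions \<open>v\<^sub>k\<close> and \<open>w\<^sub>k\<close>\<close>

lemma laguerre_function_abs_le:
  fixes n m k :: nat and C :: real
  assumes m: "m \<le> 1"
  defines "f \<equiv> \<lambda>t. C * (t^m * exp (- (t^(2*n+2)) / (2*n+2))
      * laguerre ((2 * real m - 1) / (2 * real n + 2)) k (t^(2*n+2) / (n+1)))"
  assumes norm: "((\<lambda>t. (t^n * f t)^2) has_integral 1) UNIV"
  shows "\<bar>f t\<bar> \<le> 3 + (Ek n k + 2 * real m) / 2"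
proof -
  define p where "p = laguerre_poly ((2 * real m - 1) / (2 * real n + 2)) k"
  define g where "g t = t^m * exp (- (t^(2*n+2)) / (2*n+2)) * poly p (t^(2*n+2) / (n+1))" for t :: real
  have f_eq: "f = (\<lambda>t. C * g t)"
    by (simp add: fun_eq_iff f_def g_def p_def poly_laguerre_poly)
  have E: "4 * real k * (real n + 1) + 2 * real n + 1 + 2 * real m = Ek n k + 2 * real m"
    by (simp add: Ek_def)
  obtain g' where g': "\<And>t. (g has_real_derivative g' t) (at t)"
      "\<And>t. (g' has_real_derivative (t^(4*n+2) - (Ek n k + 2 * real m) * t^(2*n)) * g t) (at t)"
    using schroedinger_ode_of_kummer_ode[OF m refl poly_DERIV poly_DERIV laguerre_ode[where k=k],
        where n=n]
    unfolding E g_def p_def by blast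
  have mass: "((\<lambda>t. t^(2*n) * (f t)^2) has_integral 1) UNIV"
    using norm by (simp add: power_mult_distrib power_mult[symmetric] mult.commute)
  interpret bound_state f "\<lambda>t. C * g' t" "\<lambda>t. t^(4*n+2)" "\<lambda>t. t^(2*n)" "Ek n k + 2 * real m"
  proof
    show "(f has_real_derivative C * g' t) (at t)" for t
      unfolding f_eq by (rule DERIV_cmult[OF g'(1)])
    show "((\<lambda>t. C * g' t) has_real_derivative (t^(4*n+2) - (Ek n k + 2 * real m) * t^(2*n)) * f t)
        (at t)" for t
      unfolding f_eq by (rule DERIV_cong[OF DERIV_cmult[OF g'(2)]]) (simp only: ac_simps)
    show "integral {a..b} (\<lambda>t. t^(2*n) * (f t)^2) \<le> 1" for a b
    proof -
      have "continuous_on {a..b} f"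
        unfolding f_def laguerre_def by (intro continuous_intros) auto
      then have "integral {a..b} (\<lambda>t. t^(2*n) * (f t)^2) \<le> integral UNIV (\<lambda>t. t^(2*n) * (f t)^2)"
        using mass by (intro integral_subset_le integrable_continuous_interval continuous_intros)
          (auto simp: zero_le_even_power)
      then show ?thesis
        using mass by (simp add: integral_unique)
    qed
    show "0 \<le> t^(4*n+2)" for t :: real
      by (rule zero_le_even_power) simp
    show "1 \<le> \<bar>t\<bar> \<Longrightarrow> 1 \<le> t^(2*n)" for t :: real
      using one_le_power[of "\<bar>t\<bar>" "2*n"] by (simp add: power_even_abs)
  qed (auto intro: continuous_intros simp: Ek_def)
  show ?thesis
    by (rule abs_le)
qed

lemma shifted_Ek_le_Ek_powr:
  assumes "m \<le> 1"
  shows "3 + (Ek n k + 2 * real m) / 2 \<le> 5 * Ek n k powr (3/2 + 1 / real (4*n+4))"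
proof -
  have "1 \<le> Ek n k"
    by (simp add: Ek_def)
  moreover have "real m \<le> 1"
    using assms by simp
  ultimately have "3 + (Ek n k + 2 * real m) / 2 \<le> 5 * Ek n k"
    by (simp add: field_simps)
  also have "\<dots> \<le> 5 * Ek n k powr (3/2 + 1 / real (4*n+4))"
    using powr_mono[of 1 "3/2 + 1 / real (4*n+4)" "Ek n k"] \<open>1 \<le> Ek n k\<close>
    by (simp add: add_increasing2)
  finally show ?thesis .
qed

theorem proposition5p2:
  fixes n :: nat and c d :: "nat \<Rightarrow> real"
  assumes c_pos: "\<And>k. c k > 0"
    and d_pos: "\<And>k. d k > 0"
    and c_norm: "\<And>k. ((\<lambda>t. (t^n * (c k * vprof n k t))^2) has_integral 1) UNIV"
    and d_norm: "\<And>k. ((\<lambda>t. (t^n * (d k * wprof n k t))^2) has_integral 1) UNIV"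
  shows "\<exists>C0>0. \<forall>k. (\<forall>t. \<bar>c k * vprof n k t\<bar> \<le> C0 * Ek n k powr (3/2 + 1/(4*n+4)))
                 \<and> (\<forall>t. \<bar>d k * wprof n k t\<bar> \<le> C0 * Ek n k powr (3/2 + 1/(4*n+4)))"
proof (intro exI[of _ 5] conjI allI)
  fix k t
  have "vprof n k t = t^0 * exp (- (t^(2*n+2)) / (2*n+2))
      * laguerre ((2 * real 0 - 1) / (2 * real n + 2)) k (t^(2*n+2) / (n+1))" for t
    by (simp add: vprof_def algebra_simps)
  then show "\<bar>c k * vprof n k t\<bar> \<le> 5 * Ek n k powr (3/2 + 1/(4*n+4))"
    using laguerre_function_abs_le[where m=0 and C="c k" and n=n and k=k and t=t]
      c_norm[of k] shifted_Ek_le_Ek_powr[of 0 n k] by simp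
  have "wprof n k t = t^1 * exp (- (t^(2*n+2)) / (2*n+2))
      * laguerre ((2 * real 1 - 1) / (2 * real n + 2)) k (t^(2*n+2) / (n+1))" for t
    by (simp add: wprof_def algebra_simps)
  then show "\<bar>d k * wprof n k t\<bar> \<le> 5 * Ek n k powr (3/2 + 1/(4*n+4))"
    using laguerre_function_abs_le[where m=1 and C="d k" and n=n and k=k and t=t]
      d_norm[of k] shifted_Ek_le_Ek_powr[of 1 n k] by simp
qed simp

end
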